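(* Let $X$ be a smooth projective complex variety with $\operatorname{Pic}(X)$ finitely generated, and let $G$ be a finite group acting on $\operatorname{Pic}(X)$ by group automorphisms such that $\chi(gD)=\chi(D)$ for all $g\in G$ and $[D]\in\operatorname{Pic}(X)$. Then there exists a finite set $S\subset\operatorname{Pic}(X)$ such that \[ \operatorname{Pic}^\chi(X,G)=\left\langle \chi(D)\langle D\rangle_G \;\middle|\; [D]\in S\right\rangle . \]
   Context: $\chi(D)$ denotes the Euler–Poincaré characteristic of the line bundle $\mathcal{O}_X(D)$. For $[D]\in\operatorname{Pic}(X)$, $\langle D\rangle_G:=\sum_{[E]\in G\cdot[D]}[E]$ is the sum over the $G$-orbit of $[D]$. $\operatorname{Pic}^\chi(X,G)$ is the subgroup of $\operatorname{Pic}(X)$ generated by $\chi(D)\langle D\rangle_G$ for all $[D]\in\operatorname{Pic}(X)$. *)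

theory Defs
  imports "HOL-Algebra.Group"
begin

inductive_set gen_subgroup :: "'p::ab_group_add set \<Rightarrow> 'p set" for A where
  gen_zero: "0 \<in> gen_subgroup A"
| gen_base: "a \<in> A \<Longrightarrow> a \<in> gen_subgroup A"
| gen_add: "x \<in> gen_subgroup A \<Longrightarrow> y \<in> gen_subgroup A \<Longrightarrow> x + y \<in> gen_subgroup A"
| gen_neg: "x \<in> gen_subgroup A \<Longrightarrow> - x \<in> gen_subgroup A"

definition zmul :: "int \<Rightarrow> 'p::ab_group_add \<Rightarrow> 'p" where
  "zmul n x = (if 0 \<le> n then (\<Sum>_\<in>{..<nat n}. x) else - (\<Sum>_\<in>{..<nat (- n)}. x))"

definition additive_action :: "('g, 'b) monoid_scheme \<Rightarrow> ('g \<Rightarrow> 'p::ab_group_add \<Rightarrow> 'p) \<Rightarrow> bool" where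
  "additive_action G act \<longleftrightarrow>
     act \<one>\<^bsub>G\<^esub> = id \<and>
     (\<forall>g\<in>carrier G. \<forall>h\<in>carrier G. act (g \<otimes>\<^bsub>G\<^esub> h) = act g \<circ> act h) \<and>
     (\<forall>g\<in>carrier G. \<forall>x y. act g (x + y) = act g x + act g y)"

definition orbit_sum :: "('g, 'b) monoid_scheme \<Rightarrow> ('g \<Rightarrow> 'p::ab_group_add \<Rightarrow> 'p) \<Rightarrow> 'p \<Rightarrow> 'p" where
  "orbit_sum G act D = (\<Sum>E\<in>(\<lambda>g. act g D) ` carrier G. E)"

definition Pic_chi :: "('g, 'b) monoid_scheme \<Rightarrow> ('g \<Rightarrow> 'p::ab_group_add \<Rightarrow> 'p) \<Rightarrow> ('p \<Rightarrow> int) \<Rightarrow> 'p set" where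
  "Pic_chi G act \<chi> = gen_subgroup {zmul (\<chi> D) (orbit_sum G act D) | D. True}"

end

theory Submission
  imports Defs
begin

text \<open>
  Only the finite generation of the Picard group matters. A subgroup of a finitely generated abelian group is finitely generated:
  induct on the generators, and for the new generator \<open>f\<close> use that the coefficients of \<open>f\<close>
  occurring in the subgroup form a subgroup of \<open>\<int>\<close>, hence are the multiples of one \<open>d\<close>.
  So \<open>Pic\<^sup>\<chi>(X,G)\<close> has finitely many generators, and each of them is an integer
  combination of finitely many of the elements \<open>\<chi>(D)\<langle>D\<rangle>\<^sub>G\<close>.
\<close>

definition is_add_subgroup :: "'p::ab_group_add set \<Rightarrow> bool" where
  "is_add_subgroup H \<longleftrightarrow> 0 \<in> H \<and> (\<forall>x\<in>H. \<forall>y\<in>H. x + y \<in> H) \<and> (\<forall>x\<in>H. - x \<in> H)"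

lemma add_subgroup_zero: "is_add_subgroup H \<Longrightarrow> 0 \<in> H"
  and add_subgroup_add: "is_add_subgroup H \<Longrightarrow> x \<in> H \<Longrightarrow> y \<in> H \<Longrightarrow> x + y \<in> H"
  and add_subgroup_uminus: "is_add_subgroup H \<Longrightarrow> x \<in> H \<Longrightarrow> - x \<in> H"
  unfolding is_add_subgroup_def by blast+

lemma add_subgroup_diff: "is_add_subgroup H \<Longrightarrow> x \<in> H \<Longrightarrow> y \<in> H \<Longrightarrow> x - y \<in> H"
  unfolding diff_conv_add_uminus by (blast intro: add_subgroup_add add_subgroup_uminus)

lemma add_subgroup_Int:
  "is_add_subgroup H \<Longrightarrow> is_add_subgroup K \<Longrightarrow> is_add_subgroup (H \<inter> K)"
  unfolding is_add_subgroup_def by blast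

lemma is_add_subgroup_gen_subgroup: "is_add_subgroup (gen_subgroup A)"
  unfolding is_add_subgroup_def by (auto intro: gen_subgroup.intros)

lemma gen_subgroup_least:
  assumes "is_add_subgroup H" "A \<subseteq> H"
  shows "gen_subgroup A \<subseteq> H"
proof
  fix x assume "x \<in> gen_subgroup A"
  then show "x \<in> H"
    using assms by (induction rule: gen_subgroup.induct) (auto simp: is_add_subgroup_def)
qed

lemma gen_subgroup_mono: "A \<subseteq> B \<Longrightarrow> gen_subgroup A \<subseteq> gen_subgroup B"
  by (meson gen_subgroup_least is_add_subgroup_gen_subgroup gen_subgroup.gen_base subset_iff)

lemma gen_subgroup_empty: "gen_subgroup {} = {0}"
  using gen_subgroup_least[of "{0}" "{}"] gen_subgroup.gen_zero
  by (auto simp: is_add_subgroup_def)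

lemma zmul_0 [simp]: "zmul 0 x = 0"
  by (simp add: zmul_def)

lemma zmul_plus1: "zmul (k + 1) x = zmul k x + x"
proof (cases "k \<ge> 0")
  case True
  then obtain n where "k = int n" by (metis nonneg_eq_int)
  then show ?thesis by (simp add: zmul_def nat_add_distrib)
next
  case False
  define n where "n = nat (- k - 1)"
  have k: "k = - int (Suc n)" using False by (simp add: n_def)
  then have "nat (- k) = Suc n" by simp
  then have "zmul k x = - ((\<Sum>_\<in>{..<n}. x) + x)"
    using False by (simp add: zmul_def)
  moreover have "zmul (k + 1) x = - (\<Sum>_\<in>{..<n}. x)"
    using k by (cases "n = 0") (simp_all add: zmul_def)
  ultimately show ?thesis by simp
qed

lemma zmul_minus1: "zmul (k - 1) x = zmul k x - x"
  using zmul_plus1[of "k - 1" x] by simp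

lemma zmul_1 [simp]: "zmul 1 x = x"
  using zmul_plus1[of 0 x] by simp

lemma zmul_uminus_left: "zmul (- k) x = - zmul k x"
  by (cases "k = 0") (auto simp: zmul_def)

lemma zmul_add_left: "zmul (a + b) x = zmul a x + zmul b x"
proof (induction b rule: int_induct[of _ 0])
  case (step1 i)
  then show ?case
    using zmul_plus1[of "a + i" x] zmul_plus1[of i x] by (simp add: add.assoc)
next
  case (step2 i)
  then show ?case
    using zmul_minus1[of "a + i" x] zmul_minus1[of i x] by (simp add: add_diff_eq)
qed simp

lemma zmul_diff_left: "zmul (a - b) x = zmul a x - zmul b x"
  using zmul_add_left[of a "- b" x] by (simp add: zmul_uminus_left)

lemma zmul_mult: "zmul (a * b) x = zmul a (zmul b x)"
proof (induction a rule: int_induct[of _ 0])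
  case (step1 i)
  then show ?case by (simp add: distrib_right zmul_add_left zmul_plus1)
next
  case (step2 i)
  then show ?case by (simp add: left_diff_distrib zmul_diff_left zmul_minus1)
qed simp

lemma zmul_add_right: "zmul k (x + y) = zmul k x + zmul k y"
proof (induction k rule: int_induct[of _ 0])
  case (step1 i)
  then show ?case unfolding zmul_plus1 by (simp add: ac_simps)
next
  case (step2 i)
  then show ?case unfolding zmul_minus1 by (simp add: diff_add_eq add_diff_eq ac_simps)
qed simp

lemma zmul_int: "zmul k (d::int) = k * d"
  by (induction k rule: int_induct[of _ 0])
    (simp_all add: zmul_plus1 zmul_minus1 distrib_right left_diff_distrib)

lemma zmul_in_add_subgroup:
  assumes "is_add_subgroup H" "x \<in> H"
  shows "zmul k x \<in> H"
  by (induction k rule: int_induct[of _ 0])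
    (use assms in \<open>simp_all add: zmul_plus1 zmul_minus1 add_subgroup_zero
      add_subgroup_add add_subgroup_diff\<close>)

lemma int_add_subgroup_multiples:
  fixes I :: "int set"
  assumes I: "is_add_subgroup I"
  shows "\<exists>d. I = range (\<lambda>m. m * d)"
proof (cases "I \<subseteq> {0}")
  case True
  then show ?thesis using add_subgroup_zero[OF I] by (intro exI[of _ 0]) auto
next
  case False
  then obtain a where "a \<in> I" "a \<noteq> 0" by auto
  then have "\<bar>a\<bar> \<in> I" using I by (cases "a \<ge> 0") (auto intro: add_subgroup_uminus)
  define d where "d = int (LEAST n. n > 0 \<and> int n \<in> I)"
  have d: "d > 0" "d \<in> I"
    using LeastI[of "\<lambda>n. n > 0 \<and> int n \<in> I" "nat \<bar>a\<bar>"] \<open>\<bar>a\<bar> \<in> I\<close> \<open>a \<noteq> 0\<close>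
    by (auto simp: d_def)
  have d_least: "d \<le> q" if "q \<in> I" "q > 0" for q
    using Least_le[of "\<lambda>n. n > 0 \<and> int n \<in> I" "nat q"] that by (simp add: d_def)
  have multiples: "m * d \<in> I" for m
    using zmul_in_add_subgroup[OF I d(2), of m] by (simp add: zmul_int)
  have "k \<in> range (\<lambda>m. m * d)" if k: "k \<in> I" for k
  proof -
    have "k mod d \<in> I"
      using add_subgroup_diff[OF I k multiples[of "k div d"]] by (simp add: minus_div_mult_eq_mod)
    moreover have "0 \<le> k mod d" "k mod d < d" using d by simp_all
    ultimately have "k mod d = 0" using d_least[of "k mod d"] by fastforce
    then have "k = (k div d) * d" using div_mult_mod_eq[of k d] by simp
    then show ?thesis by blast
  qed
  then show ?thesis using multiples by blast
qed

lemma gen_subgroup_insert: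
  "gen_subgroup (insert f F) = {x + zmul k f | x k. x \<in> gen_subgroup F}"
proof
  show "gen_subgroup (insert f F) \<subseteq> {x + zmul k f | x k. x \<in> gen_subgroup F}"
  proof
    fix y assume "y \<in> gen_subgroup (insert f F)"
    then show "y \<in> {x + zmul k f | x k. x \<in> gen_subgroup F}"
    proof (induction y rule: gen_subgroup.induct)
      case gen_zero
      have "0 = 0 + zmul 0 f" by simp
      then show ?case using gen_subgroup.gen_zero by blast
    next
      case (gen_base a)
      then consider "a = f" | "a \<in> F" by blast
      then show ?case
      proof cases
        case 1
        then have "a = 0 + zmul 1 f" by simp
        then show ?thesis using gen_subgroup.gen_zero by blast
      next
        case 2
        then have "a \<in> gen_subgroup F" by (rule gen_subgroup.gen_base)
        moreover have "a = a + zmul 0 f" by simp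
        ultimately show ?thesis by blast
      qed
    next
      case (gen_add x y)
      then obtain x1 k1 x2 k2 where "x1 \<in> gen_subgroup F" "x2 \<in> gen_subgroup F"
        "x = x1 + zmul k1 f" "y = x2 + zmul k2 f" by blast
      moreover have "x + y = (x1 + x2) + zmul (k1 + k2) f"
        using calculation by (simp add: zmul_add_left ac_simps)
      ultimately show ?case using gen_subgroup.gen_add by blast
    next
      case (gen_neg x)
      then obtain x1 k1 where "x1 \<in> gen_subgroup F" "x = x1 + zmul k1 f" by blast
      moreover have "- x = - x1 + zmul (- k1) f"
        using calculation by (simp add: zmul_uminus_left)
      ultimately show ?case using gen_subgroup.gen_neg by blast
    qed
  qed
next
  have "gen_subgroup F \<subseteq> gen_subgroup (insert f F)" "f \<in> gen_subgroup (insert f F)"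
    by (auto intro: gen_subgroup_mono[THEN subsetD] gen_subgroup.gen_base)
  then show "{x + zmul k f | x k. x \<in> gen_subgroup F} \<subseteq> gen_subgroup (insert f F)"
    using is_add_subgroup_gen_subgroup
    by (auto intro!: gen_subgroup.gen_add zmul_in_add_subgroup)
qed

lemma add_subgroup_coefficients:
  assumes "is_add_subgroup H"
  shows "is_add_subgroup {k. \<exists>x\<in>gen_subgroup F. x + zmul k f \<in> H}"
  unfolding is_add_subgroup_def
proof (intro conjI ballI)
  show "0 \<in> {k. \<exists>x\<in>gen_subgroup F. x + zmul k f \<in> H}"
    using add_subgroup_zero[OF assms] gen_subgroup.gen_zero by force
next
  fix a b assume "a \<in> {k. \<exists>x\<in>gen_subgroup F. x + zmul k f \<in> H}"
    "b \<in> {k. \<exists>x\<in>gen_subgroup F. x + zmul k f \<in> H}"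
  then obtain x y where "x \<in> gen_subgroup F" "y \<in> gen_subgroup F"
    "x + zmul a f \<in> H" "y + zmul b f \<in> H" by blast
  moreover have "(x + zmul a f) + (y + zmul b f) = (x + y) + zmul (a + b) f"
    by (simp add: zmul_add_left ac_simps)
  ultimately have "x + y \<in> gen_subgroup F" "(x + y) + zmul (a + b) f \<in> H"
    using add_subgroup_add[OF assms] gen_subgroup.gen_add by metis+
  then show "a + b \<in> {k. \<exists>x\<in>gen_subgroup F. x + zmul k f \<in> H}" by blast
next
  fix a assume "a \<in> {k. \<exists>x\<in>gen_subgroup F. x + zmul k f \<in> H}"
  then obtain x where "x \<in> gen_subgroup F" "x + zmul a f \<in> H" by blast
  moreover have "- (x + zmul a f) = - x + zmul (- a) f"
    by (simp add: zmul_uminus_left)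
  ultimately have "- x \<in> gen_subgroup F" "- x + zmul (- a) f \<in> H"
    using add_subgroup_uminus[OF assms] gen_subgroup.gen_neg by metis+
  then show "- a \<in> {k. \<exists>x\<in>gen_subgroup F. x + zmul k f \<in> H}" by blast
qed

lemma add_subgroup_finitely_generated:
  assumes "finite F" "is_add_subgroup H" "H \<subseteq> gen_subgroup F"
  shows "\<exists>T. finite T \<and> T \<subseteq> H \<and> gen_subgroup T = H"
  using assms
proof (induction F arbitrary: H rule: finite_induct)
  case empty
  then have "H = {0}" using add_subgroup_zero by (auto simp: gen_subgroup_empty)
  then show ?case by (auto simp: gen_subgroup_empty)
next
  case (insert f F)
  have H: "is_add_subgroup H" by fact
  obtain T' where T': "finite T'" "T' \<subseteq> H \<inter> gen_subgroup F" "gen_subgroup T' = H \<inter> gen_subgroup F"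
    using insert.IH[of "H \<inter> gen_subgroup F"] add_subgroup_Int[OF H is_add_subgroup_gen_subgroup]
    by auto
  obtain d where d: "{k. \<exists>x\<in>gen_subgroup F. x + zmul k f \<in> H} = range (\<lambda>m. m * d)"
    using int_add_subgroup_multiples[OF add_subgroup_coefficients[OF H]] by blast
  then have "d \<in> {k. \<exists>x\<in>gen_subgroup F. x + zmul k f \<in> H}"
    using rangeI[of "\<lambda>m. m * d" 1] by simp
  then obtain x0 where x0: "x0 \<in> gen_subgroup F" "x0 + zmul d f \<in> H" by blast
  define h0 where "h0 = x0 + zmul d f"
  have "H \<subseteq> gen_subgroup (insert h0 T')"
  proof
    fix h assume h: "h \<in> H"
    then obtain x k where x: "x \<in> gen_subgroup F" "h = x + zmul k f"
      using insert.prems(2) by (auto simp: gen_subgroup_insert)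
    with h d obtain m where "k = m * d" by blast
    then have "h - zmul m h0 = x - zmul m x0"
      using x by (simp add: h0_def zmul_add_right zmul_mult)
    moreover have "h - zmul m h0 \<in> H"
      using x0 h by (simp add: h0_def H add_subgroup_diff zmul_in_add_subgroup)
    moreover have "x - zmul m x0 \<in> gen_subgroup F"
      using add_subgroup_diff[OF is_add_subgroup_gen_subgroup x(1)]
        zmul_in_add_subgroup[OF is_add_subgroup_gen_subgroup x0(1)] by blast
    ultimately have "h - zmul m h0 \<in> gen_subgroup T'" using T'(3) by simp
    then show "h \<in> gen_subgroup (insert h0 T')"
      unfolding gen_subgroup_insert by (intro CollectI exI[of _ "h - zmul m h0"] exI[of _ m]) simp
  qed
  moreover have "insert h0 T' \<subseteq> H" using T'(2) x0 h0_def by auto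
  ultimately show ?case
    using gen_subgroup_least[OF H, of "insert h0 T'"] T'(1) by (intro exI[of _ "insert h0 T'"]) auto
qed

lemma gen_subgroup_finite_support:
  "x \<in> gen_subgroup A \<Longrightarrow> \<exists>B\<subseteq>A. finite B \<and> x \<in> gen_subgroup B"
proof (induction x rule: gen_subgroup.induct)
  case gen_zero
  then show ?case using gen_subgroup.gen_zero by blast
next
  case (gen_base a)
  then show ?case using gen_subgroup.gen_base[of a "{a}"] by blast
next
  case (gen_add x y)
  then obtain B C where "B \<subseteq> A" "finite B" "x \<in> gen_subgroup B"
    "C \<subseteq> A" "finite C" "y \<in> gen_subgroup C" by blast
  then show ?case
    using gen_subgroup_mono[of B "B \<union> C"] gen_subgroup_mono[of C "B \<union> C"]
    by (intro exI[of _ "B \<union> C"]) (auto intro: gen_subgroup.gen_add)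
next
  case (gen_neg x)
  then show ?case using gen_subgroup.gen_neg by blast
qed

lemma finite_subset_gen_subgroup_finite_support:
  assumes "finite T" "T \<subseteq> gen_subgroup A"
  shows "\<exists>B\<subseteq>A. finite B \<and> T \<subseteq> gen_subgroup B"
proof -
  obtain B where B: "\<And>t. t \<in> T \<Longrightarrow> B t \<subseteq> A \<and> finite (B t) \<and> t \<in> gen_subgroup (B t)"
    using gen_subgroup_finite_support assms(2) by (metis subsetD)
  have "t \<in> gen_subgroup (\<Union> (B ` T))" if "t \<in> T" for t
    using B[OF that] gen_subgroup_mono[of "B t" "\<Union> (B ` T)"] that by blast
  then show ?thesis using B assms(1) by (intro exI[of _ "\<Union> (B ` T)"]) auto
qed

lemma gen_subgroup_finite_generators:
  assumes "finite F" "gen_subgroup A \<subseteq> gen_subgroup F"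
  shows "\<exists>B\<subseteq>A. finite B \<and> gen_subgroup B = gen_subgroup A"
proof -
  obtain T where T: "finite T" "T \<subseteq> gen_subgroup A" "gen_subgroup T = gen_subgroup A"
    using add_subgroup_finitely_generated[OF assms(1) is_add_subgroup_gen_subgroup assms(2)]
    by blast
  obtain B where B: "B \<subseteq> A" "finite B" "T \<subseteq> gen_subgroup B"
    using finite_subset_gen_subgroup_finite_support[OF T(1,2)] by blast
  have "gen_subgroup A \<subseteq> gen_subgroup B"
    using T(3) gen_subgroup_least[OF is_add_subgroup_gen_subgroup B(3)] by simp
  with B gen_subgroup_mono[OF B(1)] show ?thesis by blast
qed

theorem theorem5p4:
  fixes G :: "('g, 'b) monoid_scheme"
    and act :: "'g \<Rightarrow> 'p::ab_group_add \<Rightarrow> 'p"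
    and \<chi> :: "'p \<Rightarrow> int"
  assumes fg: "\<exists>F. finite F \<and> gen_subgroup F = (UNIV :: 'p set)"
    and grp: "group G" and fin: "finite (carrier G)"
    and act: "additive_action G act"
    and inv: "\<And>g D. g \<in> carrier G \<Longrightarrow> \<chi> (act g D) = \<chi> D"
  shows "\<exists>S. finite S \<and>
           Pic_chi G act \<chi> = gen_subgroup {zmul (\<chi> D) (orbit_sum G act D) | D. D \<in> S}"
proof -
  define f where "f D = zmul (\<chi> D) (orbit_sum G act D)" for D
  have generators: "{zmul (\<chi> D) (orbit_sum G act D) | D. D \<in> S} = f ` S" for S
    unfolding f_def by auto
  obtain F where "finite F" "gen_subgroup F = (UNIV :: 'p set)" using fg by blast
  then obtain B where "B \<subseteq> range f" "finite B" "gen_subgroup B = gen_subgroup (range f)"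
    using gen_subgroup_finite_generators[of F "range f"] by auto
  moreover obtain S where "finite S" "B = f ` S"
    using finite_subset_image[OF \<open>finite B\<close> \<open>B \<subseteq> range f\<close>] by blast
  ultimately show ?thesis
    unfolding Pic_chi_def generators[symmetric] by auto
qed

end
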